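(* Let $\overline{H}_n = \sum_{j=1}^n \frac{(-1)^{j-1}}{j}$ denote the $n$th skew-harmonic number and let $\operatorname{Ein}(z) = \int_0^z \frac{1 - e^{-t}}{t}\,dt$ denote the complementary exponential integral. For all real $y$, $$\sum_{n = 1}^\infty \overline{H}_n\left(e^y - 1 - \frac{y}{1!} - \frac{y^2}{2!} - \ldots - \frac{y^n}{n!}\right) = y e^y\left[\operatorname{Ein}(2y) - \operatorname{Ein}(y)\right] - \cosh (y) +1.$$ *)

theory Defs
  imports "HOL-Analysis.Analysis"
begin

definition skew_harmonic :: "nat \<Rightarrow> real" where
  "skew_harmonic n = (\<Sum>j=1..n. (-1) ^ (j - 1) / real j)"

text \<open>The integrand is extended by its limit 1 at t = 0 (irrelevant for the integral).\<close>
definition Ein_integrand :: "real \<Rightarrow> real" where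
  "Ein_integrand t = (if t = 0 then 1 else (1 - exp (- t)) / t)"

definition Ein :: "real \<Rightarrow> real" where
  "Ein z = (if 0 \<le> z then integral {0..z} Ein_integrand
            else - integral {z..0} Ein_integrand)"

end

(* With r_n(y) = e^y - (sum of y^k/k! for k < n) the Taylor tails of the exponential, and the
   skew-harmonic numbers written as integrals of geometric sums,
     H_n = integral over [0,1] of (sum of (-x)^j for j < n) = integral of (1 - (-x)^n) / (1 + x),
   the series (shifted to start at n = 0, where H_0 = 0) is the integral over [0,1] of
   sum_n r_(n+1)(y) (1 - (-x)^n) / (1 + x).  Sum and integral may be exchanged by dominated
   convergence: the tails are absolutely summable and the geometric sums lie in [0,1].  The inner
   series follows from the two generating functions
     sum_n r_(n+1)(y) = y e^y,    sum_n r_(n+1)(y) t^n = (e^y - e^(t y)) / (1 - t)  (|t| <= 1, t /= 1),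
   both proved by summation by parts, and equals y e^y/(1+x) - (e^y - e^(-x y))/(1+x)^2.
   This has the antiderivative (e^y - e^(-x y))/(1+x) + y e^y Ein(y (1+x)). *)

theory Submission
  imports Defs
begin

lemma isCont_Ein_integrand: "isCont Ein_integrand t"
proof (cases "t = 0")
  case True
  have "((\<lambda>t::real. 1 - exp (- t)) has_field_derivative 1) (at 0)"
    by (auto intro!: derivative_eq_intros)
  then have "((\<lambda>t::real. (1 - exp (- t)) / t) \<longlongrightarrow> 1) (at 0)"
    unfolding has_field_derivative_iff by simp
  then have "(Ein_integrand \<longlongrightarrow> 1) (at 0)"
    by (rule Lim_transform_eventually) (simp add: eventually_at_filter Ein_integrand_def)
  then show ?thesis
    using True by (simp add: isCont_def Ein_integrand_def)
next
  case False
  have "\<forall>\<^sub>F s in nhds t. (1 - exp (- s)) / s = Ein_integrand s"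
    using eventually_nhds_in_open[of "- {0}" t] False
    by (auto elim!: eventually_mono simp: Ein_integrand_def)
  moreover have "isCont (\<lambda>s. (1 - exp (- s)) / s) t"
    using False by (auto intro!: continuous_intros)
  ultimately show ?thesis
    using isCont_cong[of "\<lambda>s. (1 - exp (- s)) / s" Ein_integrand t] by blast
qed

lemma continuous_on_Ein_integrand: "continuous_on S Ein_integrand"
  by (simp add: isCont_Ein_integrand continuous_at_imp_continuous_on)

lemma Ein_eq_integral_diff:
  assumes "a \<le> z" "a \<le> 0"
  shows "Ein z = integral {a..z} Ein_integrand - integral {a..0} Ein_integrand"
proof -
  have integrable: "Ein_integrand integrable_on {u..v}" for u v
    by (simp add: continuous_on_Ein_integrand integrable_continuous_real)
  show ?thesis
  proof (cases "0 \<le> z")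
    case True
    then show ?thesis
      using Henstock_Kurzweil_Integration.integral_combine[of a 0 z Ein_integrand] integrable assms
      by (simp add: Ein_def)
  next
    case False
    then show ?thesis
      using Henstock_Kurzweil_Integration.integral_combine[of a z 0 Ein_integrand] integrable assms
      by (simp add: Ein_def)
  qed
qed

lemma has_real_derivative_Ein: "(Ein has_real_derivative Ein_integrand z) (at z)"
proof -
  define a b where "a = - \<bar>z\<bar> - 1" and "b = \<bar>z\<bar> + 1"
  have "z \<in> {a..b}"
    by (auto simp: a_def b_def)
  from integral_has_real_derivative[OF continuous_on_Ein_integrand this]
  have "((\<lambda>x. integral {a..x} Ein_integrand - integral {a..0} Ein_integrand)
          has_real_derivative Ein_integrand z) (at z within {a..b})"
    by (auto intro!: derivative_eq_intros)
  then have "((\<lambda>x. integral {a..x} Ein_integrand - integral {a..0} Ein_integrand)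
               has_real_derivative Ein_integrand z) (at z)"
    by (subst (asm) at_within_interior) (auto simp: a_def b_def)
  then show ?thesis
    by (rule has_field_derivative_transform_within_open[where S = "{a<..<b}"])
       (auto simp: a_def b_def intro!: Ein_eq_integral_diff[symmetric])
qed

lemma has_real_derivative_Ein_compose [derivative_intros]:
  "(g has_real_derivative g') (at x within S) \<Longrightarrow>
   ((\<lambda>x. Ein (g x)) has_real_derivative Ein_integrand (g x) * g') (at x within S)"
  by (rule DERIV_chain2[OF has_real_derivative_Ein])

lemma mult_Ein_integrand_scaled:
  assumes "s \<noteq> 0"
  shows "y * Ein_integrand (y * s) = (1 - exp (- (y * s))) / s"
  using assms by (simp add: Ein_integrand_def)

lemma Ein_antiderivative:
  fixes x y :: real
  assumes "1 + x \<noteq> 0"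
  shows "((\<lambda>t. (exp y - exp (- (t * y))) / (1 + t) + y * exp y * Ein (y * (1 + t)))
           has_real_derivative y * exp y / (1 + x) - (exp y - exp (- (x * y))) / (1 + x)^2) (at x)"
proof -
  have "Ein_integrand (y * (1 + x)) * y * (y * exp y)
      = y * exp y * (y * Ein_integrand (y * (1 + x)))"
    by (simp only: ac_simps)
  also have "\<dots> = y * (exp y - exp y * exp (- (y * (1 + x)))) / (1 + x)"
    by (simp add: mult_Ein_integrand_scaled[OF assms] right_diff_distrib)
  also have "exp y * exp (- (y * (1 + x))) = exp (- (x * y))"
    by (simp add: exp_add[symmetric] algebra_simps)
  finally have "Ein_integrand (y * (1 + x)) * y * (y * exp y)
      = y * (exp y - exp (- (x * y))) / (1 + x)" .
  then have "((\<lambda>t. y * exp y * Ein (y * (1 + t)))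
               has_real_derivative y * (exp y - exp (- (x * y))) / (1 + x)) (at x)"
    by (auto intro!: derivative_eq_intros)
  moreover have "((\<lambda>t. (exp y - exp (- (t * y))) / (1 + t)) has_real_derivative
      (y * exp (- (x * y)) * (1 + x) - (exp y - exp (- (x * y)))) / (1 + x)^2) (at x)"
    using assms by (auto intro!: derivative_eq_intros simp: power2_eq_square)
  moreover have "(y * exp (- (x * y)) * (1 + x) - (exp y - exp (- (x * y)))) / (1 + x)^2
      + y * (exp y - exp (- (x * y))) / (1 + x)
      = y * exp y / (1 + x) - (exp y - exp (- (x * y))) / (1 + x)^2"
  proof -
    have "y * exp (- (x * y)) * (1 + x) / (1 + x)^2 = y * exp (- (x * y)) / (1 + x)"
      using assms by (simp add: power2_eq_square)
    then show ?thesis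
      by (simp add: diff_divide_distrib right_diff_distrib)
  qed
  ultimately show ?thesis
    using DERIV_add by fastforce
qed

lemma has_integral_Ein_diff:
  "((\<lambda>x. y * exp y / (1 + x) - (exp y - exp (- (x * y))) / (1 + x)^2)
      has_integral (y * exp y * (Ein (2 * y) - Ein y) - cosh y + 1)) {0..1}"
proof -
  have "((\<lambda>x. y * exp y / (1 + x) - (exp y - exp (- (x * y))) / (1 + x)^2) has_integral
          ((exp y - exp (- (1 * y))) / (1 + 1) + y * exp y * Ein (y * (1 + 1))
         - ((exp y - exp (- (0 * y))) / (1 + 0) + y * exp y * Ein (y * (1 + 0))))) {0..1}"
    by (intro fundamental_theorem_of_calculus)
       (auto intro!: has_field_derivative_at_within Ein_antiderivative
             simp: has_real_derivative_iff_has_vector_derivative[symmetric])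
  then show ?thesis
    by (simp add: cosh_def mult.commute field_simps)
qed

definition exp_tail :: "nat \<Rightarrow> real \<Rightarrow> real" where
  "exp_tail n u = exp u - (\<Sum>k<n. u ^ k / fact k)"

lemma exp_tail_Suc: "exp_tail (Suc n) u = exp_tail n u - u ^ n / fact n"
  by (simp add: exp_tail_def)

lemma exp_partial_sums_LIMSEQ: "(\<lambda>n. \<Sum>k<n. u ^ k / fact k) \<longlonglongrightarrow> exp (u :: real)"
  using exp_converges[of u] by (simp add: sums_def divide_inverse_commute)

lemma exp_tail_LIMSEQ: "(\<lambda>n. exp_tail n u) \<longlonglongrightarrow> 0"
  using tendsto_diff[OF tendsto_const exp_partial_sums_LIMSEQ, of "exp u" u]
  by (simp add: exp_tail_def)

lemma abs_exp_tail_le: "\<bar>exp_tail n u\<bar> \<le> exp \<bar>u\<bar> * \<bar>u\<bar> ^ n / fact n"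
proof -
  obtain t where t: "\<bar>t\<bar> \<le> \<bar>u\<bar>" "exp u = (\<Sum>k<n. u ^ k / fact k) + exp t / fact n * u ^ n"
    using Maclaurin_exp_le[of u n] by blast
  then have "\<bar>exp_tail n u\<bar> = exp t * \<bar>u\<bar> ^ n / fact n"
    by (simp add: exp_tail_def abs_mult power_abs)
  also have "\<dots> \<le> exp \<bar>u\<bar> * \<bar>u\<bar> ^ n / fact n"
    using t(1) by (intro divide_right_mono mult_right_mono) auto
  finally show ?thesis .
qed

lemma summable_power_div_fact: "summable (\<lambda>n. u ^ n / fact n :: real)"
  using exp_converges[of u] by (simp add: sums_summable divide_inverse_commute)

lemma summable_abs_exp_tail: "summable (\<lambda>n. \<bar>exp_tail n u\<bar>)"
proof (rule summable_comparison_test)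
  show "\<exists>N. \<forall>n\<ge>N. norm \<bar>exp_tail n u\<bar> \<le> exp \<bar>u\<bar> * (\<bar>u\<bar> ^ n / fact n)"
    using abs_exp_tail_le by auto
  show "summable (\<lambda>n. exp \<bar>u\<bar> * (\<bar>u\<bar> ^ n / fact n))"
    by (intro summable_mult summable_power_div_fact)
qed

lemma mult_exp_tail_LIMSEQ: "(\<lambda>n. real n * exp_tail (Suc n) u) \<longlonglongrightarrow> 0"
proof (rule Lim_null_comparison)
  show "\<forall>\<^sub>F n in sequentially.
          norm (real n * exp_tail (Suc n) u) \<le> exp \<bar>u\<bar> * \<bar>u\<bar> * (\<bar>u\<bar> ^ n / fact n)"
  proof (intro always_eventually allI)
    fix n
    have "norm (real n * exp_tail (Suc n) u)
        \<le> real (Suc n) * (exp \<bar>u\<bar> * \<bar>u\<bar> ^ Suc n / fact (Suc n))"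
      unfolding real_norm_def abs_mult
      by (intro mult_mono abs_exp_tail_le) auto
    also have "\<dots> = exp \<bar>u\<bar> * \<bar>u\<bar> * (\<bar>u\<bar> ^ n / fact n)"
      by (simp add: field_simps del: of_nat_Suc)
    finally show "norm (real n * exp_tail (Suc n) u) \<le> \<dots>" .
  qed
  show "(\<lambda>n. exp \<bar>u\<bar> * \<bar>u\<bar> * (\<bar>u\<bar> ^ n / fact n)) \<longlonglongrightarrow> 0"
    using tendsto_mult_right_zero[OF summable_LIMSEQ_zero[OF summable_power_div_fact]] .
qed

lemma sum_exp_tail:
  "(\<Sum>n<N. exp_tail (Suc n) u) = real N * exp_tail (Suc N) u + u * (\<Sum>k<N. u ^ k / fact k)"
proof (induction N)
  case 0
  then show ?case by simp
next
  case (Suc N)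
  have "real (Suc N) * (u ^ Suc N / fact (Suc N)) = u * (u ^ N / fact N)"
    by (simp add: field_simps del: of_nat_Suc)
  then show ?case
    using Suc.IH by (simp add: exp_tail_Suc[of "Suc N"] algebra_simps)
qed

lemma sums_exp_tail: "(\<lambda>n. exp_tail (Suc n) u) sums (u * exp u)"
proof -
  have "(\<lambda>N. real N * exp_tail (Suc N) u + u * (\<Sum>k<N. u ^ k / fact k))
          \<longlonglongrightarrow> 0 + u * exp u"
    by (intro tendsto_intros mult_exp_tail_LIMSEQ exp_partial_sums_LIMSEQ)
  then show ?thesis
    by (simp add: sums_def sum_exp_tail)
qed

lemma sum_exp_tail_power:
  "(1 - t) * (\<Sum>n<N. exp_tail (Suc n) u * t ^ n)
     = exp u - (\<Sum>k<N. (t * u) ^ k / fact k) - exp_tail N u * t ^ N"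
proof (induction N)
  case 0
  then show ?case by (simp add: exp_tail_def)
next
  case (Suc N)
  have "(1 - t) * (\<Sum>n<Suc N. exp_tail (Suc n) u * t ^ n)
      = (1 - t) * (\<Sum>n<N. exp_tail (Suc n) u * t ^ n) + (1 - t) * exp_tail (Suc N) u * t ^ N"
    by (simp add: algebra_simps)
  then show ?case
    using Suc.IH
    by (simp add: exp_tail_Suc[of N] power_mult_distrib algebra_simps diff_divide_distrib)
qed

lemma sums_exp_tail_power:
  assumes "\<bar>t\<bar> \<le> 1" "t \<noteq> 1"
  shows "(\<lambda>n. exp_tail (Suc n) u * t ^ n) sums ((exp u - exp (t * u)) / (1 - t))"
proof -
  have "(\<lambda>N. exp_tail N u * t ^ N) \<longlonglongrightarrow> 0"
  proof (rule Lim_null_comparison[OF _ tendsto_rabs_zero[OF exp_tail_LIMSEQ]])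
    show "\<forall>\<^sub>F N in sequentially. norm (exp_tail N u * t ^ N) \<le> \<bar>exp_tail N u\<bar>"
      using assms(1) by (intro always_eventually allI)
        (simp add: abs_mult power_abs mult_left_le power_le_one)
  qed
  then have "(\<lambda>N. (exp u - (\<Sum>k<N. (t * u) ^ k / fact k) - exp_tail N u * t ^ N) / (1 - t))
               \<longlonglongrightarrow> (exp u - exp (t * u) - 0) / (1 - t)"
    using assms(2) by (intro tendsto_intros exp_partial_sums_LIMSEQ) auto
  moreover have "(\<Sum>n<N. exp_tail (Suc n) u * t ^ n)
      = (exp u - (\<Sum>k<N. (t * u) ^ k / fact k) - exp_tail N u * t ^ N) / (1 - t)" for N
    using sum_exp_tail_power[of t u N] assms(2) by (simp add: field_simps)
  ultimately show ?thesis
    by (simp add: sums_def)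
qed

lemma skew_harmonic_eq_sum: "skew_harmonic n = (\<Sum>j<n. (-1) ^ j / real (Suc j))"
  by (simp add: skew_harmonic_def sum.atLeast1_atMost_eq)

lemma power_has_integral_unit_interval: "((\<lambda>x::real. x ^ j) has_integral 1 / real (Suc j)) {0..1}"
proof -
  have "((\<lambda>x::real. x ^ Suc j / real (Suc j)) has_real_derivative x ^ j) (at x)" for x :: real
    using DERIV_cdivide[OF DERIV_pow[of "Suc j" x], of "real (Suc j)"] by (simp del: of_nat_Suc)
  then have "((\<lambda>x::real. x ^ j) has_integral
                1 ^ Suc j / real (Suc j) - 0 ^ Suc j / real (Suc j)) {0..1}"
    by (intro fundamental_theorem_of_calculus)
       (auto intro: has_field_derivative_at_within
             simp: has_real_derivative_iff_has_vector_derivative[symmetric])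
  then show ?thesis
    by simp
qed

lemma skew_harmonic_has_integral: "((\<lambda>x. \<Sum>j<n. (- x) ^ j) has_integral skew_harmonic n) {0..1}"
proof -
  have "((\<lambda>x. \<Sum>j<n. (-1) ^ j * x ^ j)
          has_integral (\<Sum>j<n. (-1) ^ j * (1 / real (Suc j)))) {0..1}"
    by (intro has_integral_sum finite_lessThan has_integral_mult_right power_has_integral_unit_interval)
  moreover have "(\<lambda>x. \<Sum>j<n. (-1) ^ j * x ^ j) = (\<lambda>x::real. \<Sum>j<n. (- x) ^ j)"
    by (simp only: power_minus[symmetric])
  ultimately show ?thesis
    by (simp add: skew_harmonic_eq_sum)
qed

lemma sum_power_minus_eq:
  fixes x :: "'a :: field"
  assumes "1 + x \<noteq> 0"
  shows "(\<Sum>j<n. (- x) ^ j) = (1 - (- x) ^ n) / (1 + x)"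
  using one_diff_power_eq[of "- x" n] assms by (simp add: field_simps)

lemma abs_sum_power_minus_le_one:
  fixes x :: real
  assumes "0 \<le> x" "x \<le> 1"
  shows "\<bar>\<Sum>j<n. (- x) ^ j\<bar> \<le> 1"
proof (cases n)
  case 0
  then show ?thesis by simp
next
  case (Suc m)
  have power_le: "\<bar>(- x) ^ n\<bar> \<le> x"
    using assms by (simp add: Suc abs_mult power_abs mult_left_le power_le_one)
  have "0 \<le> 1 - (- x) ^ n" "1 - (- x) ^ n \<le> 1 + x"
    using abs_le_D1[OF power_le] abs_le_D2[OF power_le] assms by linarith+
  moreover have "(\<Sum>j<n. (- x) ^ j) = (1 - (- x) ^ n) / (1 + x)"
    using assms by (intro sum_power_minus_eq) auto
  ultimately show ?thesis
    using assms by (simp add: abs_le_iff)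
qed

lemma exp_tail_sum_power_minus_sums:
  fixes x y :: real
  assumes "0 \<le> x" "x \<le> 1"
  shows "(\<lambda>n. exp_tail (Suc n) y * (\<Sum>j<n. (- x) ^ j))
           sums (y * exp y / (1 + x) - (exp y - exp (- (x * y))) / (1 + x)^2)"
proof -
  have "(\<lambda>n. (exp_tail (Suc n) y - exp_tail (Suc n) y * (- x) ^ n) / (1 + x))
          sums ((y * exp y - (exp y - exp (- x * y)) / (1 - - x)) / (1 + x))"
    using assms by (intro sums_divide sums_diff sums_exp_tail sums_exp_tail_power) auto
  moreover have "exp_tail (Suc n) y * (\<Sum>j<n. (- x) ^ j)
      = (exp_tail (Suc n) y - exp_tail (Suc n) y * (- x) ^ n) / (1 + x)" for n
    using assms by (simp add: sum_power_minus_eq right_diff_distrib)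
  moreover have "(y * exp y - (exp y - exp (- x * y)) / (1 - - x)) / (1 + x)
      = y * exp y / (1 + x) - (exp y - exp (- (x * y))) / (1 + x)^2"
    by (simp add: diff_divide_distrib power2_eq_square)
  ultimately show ?thesis
    by simp
qed

lemma skew_harmonic_exp_tail_sums:
  "(\<lambda>n. skew_harmonic n * exp_tail (Suc n) y)
     sums (y * exp y * (Ein (2 * y) - Ein y) - cosh y + 1)"
proof -
  define g where "g N x = (\<Sum>n<N. exp_tail (Suc n) y * (\<Sum>j<n. (- x) ^ j))" for N x
  define f where "f x = y * exp y / (1 + x) - (exp y - exp (- (x * y))) / (1 + x)^2" for x
  define B where "B = (\<Sum>n. \<bar>exp_tail (Suc n) y\<bar>)"
  have g_integral: "(g N has_integral (\<Sum>n<N. skew_harmonic n * exp_tail (Suc n) y)) {0..1}" for N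
    unfolding g_def using has_integral_mult_right[OF skew_harmonic_has_integral]
    by (intro has_integral_sum finite_lessThan) (simp only: mult.commute[of "skew_harmonic _"])
  have "summable (\<lambda>n. \<bar>exp_tail (Suc n) y\<bar>)"
    using summable_abs_exp_tail[of y] by (subst summable_Suc_iff)
  then have g_bound: "norm (g N x) \<le> B" if "x \<in> {0..1}" for N x
  proof -
    have "norm (g N x) \<le> (\<Sum>n<N. \<bar>exp_tail (Suc n) y\<bar> * \<bar>\<Sum>j<n. (- x) ^ j\<bar>)"
      unfolding g_def real_norm_def abs_mult[symmetric] by (rule sum_abs)
    also have "\<dots> \<le> (\<Sum>n<N. \<bar>exp_tail (Suc n) y\<bar>)"
      using that by (intro sum_mono mult_left_le abs_sum_power_minus_le_one abs_ge_zero) auto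
    also have "\<dots> \<le> B"
      unfolding B_def using \<open>summable _\<close> by (rule sum_le_suminf) auto
    finally show ?thesis .
  qed
  have g_LIMSEQ: "(\<lambda>N. g N x) \<longlonglongrightarrow> f x" if "x \<in> {0..1}" for x
    using exp_tail_sum_power_minus_sums[of x y] that unfolding g_def f_def sums_def by simp
  have "(\<lambda>N. integral {0..1} (g N)) \<longlonglongrightarrow> integral {0..1} f"
  proof (rule dominated_convergence(2)[where h = "\<lambda>_. B"])
    show "g N integrable_on {0..1}" for N
      using g_integral by blast
  qed (use g_bound g_LIMSEQ in auto)
  moreover have "integral {0..1} f = y * exp y * (Ein (2 * y) - Ein y) - cosh y + 1"
    unfolding f_def using has_integral_Ein_diff by (rule integral_unique)
  moreover have "integral {0..1} (g N) = (\<Sum>n<N. skew_harmonic n * exp_tail (Suc n) y)" for N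
    using g_integral by (rule integral_unique)
  ultimately show ?thesis
    unfolding sums_def by simp
qed

theorem mainTheorem8:
  fixes y :: real
  shows "(\<lambda>n. skew_harmonic (Suc n) * (exp y - (\<Sum>k\<le>Suc n. y ^ k / fact k)))
           sums (y * exp y * (Ein (2 * y) - Ein y) - cosh y + 1)"
proof -
  have "(\<lambda>n. skew_harmonic (Suc n) * (exp y - (\<Sum>k\<le>Suc n. y ^ k / fact k)))
      = (\<lambda>n. skew_harmonic (Suc n) * exp_tail (Suc (Suc n)) y)"
    by (simp add: exp_tail_def lessThan_Suc_atMost)
  moreover have "skew_harmonic 0 = 0"
    by (simp add: skew_harmonic_def)
  ultimately show ?thesis
    using skew_harmonic_exp_tail_sums[of y]
      sums_Suc_iff[of "\<lambda>n. skew_harmonic n * exp_tail (Suc n) y"]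
    by simp
qed

end
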